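(* Let $G\in\mathcal{G}(\widehat{C}_6,\widehat{C}_7)$, let $x\in V(G)$, let $A$ be a connected component of $G[N_2(x)]$ not belonging to $A^*$, and let $a,b$ be adjacent vertices of $A$ with $|N(a)\cap D|=|N(b)\cap D|=2$. Then there is no independent set $S\subseteq N_2(x)\setminus V(A^* )$ with $D\subseteq N(S)$.
   Context: All graphs are finite, simple and undirected. $\mathcal{G}(\widehat{C}_6,\widehat{C}_7)$ is the family of graphs with no subgraph (not necessarily induced) isomorphic to $C_6$ or $C_7$. For a vertex set $S$, $N_i(S)$ is the set of vertices at distance exactly $i$ from $S$, $N(S)=N_1(S)$, $N(v)=N(\{v\})$, $N_2(v)=N_2(\{v\})$ (all in $G$). $A^*$ is the set of connected components $A$ of $G[N_2(x)]$ for which there exists a vertex $a\in V(A)$ with $N(x)\cap N(a)=N(x)\cap N(V(A))$; $V(A^* )$ is the union of their vertex sets; and $D=N(x)\setminus N(V(A^* ))$. *)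

theory Defs
  imports Main
begin

definition simple_graph :: "'a set \<Rightarrow> ('a \<Rightarrow> 'a \<Rightarrow> bool) \<Rightarrow> bool" where
  "simple_graph V E \<longleftrightarrow> finite V \<and> (\<forall>u v. E u v \<longrightarrow> u \<in> V \<and> v \<in> V)
     \<and> (\<forall>u v. E u v \<longrightarrow> E v u) \<and> (\<forall>v. \<not> E v v)"

definition has_cycle :: "'a set \<Rightarrow> ('a \<Rightarrow> 'a \<Rightarrow> bool) \<Rightarrow> nat \<Rightarrow> bool" where
  "has_cycle V E k \<longleftrightarrow> (\<exists>f. inj_on f {0..<k} \<and> f ` {0..<k} \<subseteq> V
       \<and> (\<forall>i<k. E (f i) (f ((i + 1) mod k))))"

definition nbhd :: "'a set \<Rightarrow> ('a \<Rightarrow> 'a \<Rightarrow> bool) \<Rightarrow> 'a set \<Rightarrow> 'a set" where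
  "nbhd V E S = {u \<in> V. u \<notin> S \<and> (\<exists>s\<in>S. E s u)}"

definition nbhd2 :: "'a set \<Rightarrow> ('a \<Rightarrow> 'a \<Rightarrow> bool) \<Rightarrow> 'a \<Rightarrow> 'a set" where
  "nbhd2 V E x = {u \<in> V. u \<noteq> x \<and> \<not> E x u \<and> (\<exists>w. E x w \<and> E w u)}"

definition components :: "('a \<Rightarrow> 'a \<Rightarrow> bool) \<Rightarrow> 'a set \<Rightarrow> 'a set set" where
  "components E W = {{u. (\<lambda>p q. E p q \<and> p \<in> W \<and> q \<in> W)\<^sup>*\<^sup>* v u} | v. v \<in> W}"

definition Astar :: "'a set \<Rightarrow> ('a \<Rightarrow> 'a \<Rightarrow> bool) \<Rightarrow> 'a \<Rightarrow> 'a set set" where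
  "Astar V E x = {A \<in> components E (nbhd2 V E x).
      \<exists>a\<in>A. nbhd V E {x} \<inter> nbhd V E {a} = nbhd V E {x} \<inter> nbhd V E A}"

definition VAstar :: "'a set \<Rightarrow> ('a \<Rightarrow> 'a \<Rightarrow> bool) \<Rightarrow> 'a \<Rightarrow> 'a set" where
  "VAstar V E x = \<Union> (Astar V E x)"

definition Dset :: "'a set \<Rightarrow> ('a \<Rightarrow> 'a \<Rightarrow> bool) \<Rightarrow> 'a \<Rightarrow> 'a set" where
  "Dset V E x = nbhd V E {x} - nbhd V E (VAstar V E x)"

definition independent :: "('a \<Rightarrow> 'a \<Rightarrow> bool) \<Rightarrow> 'a set \<Rightarrow> bool" where
  "independent E S \<longleftrightarrow> (\<forall>u\<in>S. \<forall>v\<in>S. \<not> E u v)"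

end

theory Submission
  imports Defs
begin

text \<open>
  Write \<open>X = N(x)\<close>. Since \<open>a\<close> and \<open>b\<close> both have two neighbours in \<open>X\<close>, any further vertex of
  \<open>A\<close> would close a \<open>C\<^sub>6\<close> through \<open>x\<close>, so \<open>A = {a, b}\<close>; as \<open>A \<notin> A\<^sup>*\<close>, each of \<open>a, b\<close> has a
  private neighbour in \<open>X\<close>, and then a common neighbour in \<open>X\<close> would again give a \<open>C\<^sub>6\<close>. Hence the
  \<open>D\<close>-neighbours \<open>d\<^sub>1, d\<^sub>2\<close> of \<open>a\<close> and \<open>d\<^sub>3, d\<^sub>4\<close> of \<open>b\<close> are four distinct vertices.
  Suppose an independent \<open>S\<close> dominates \<open>D\<close>, say \<open>a \<notin> S\<close>, with \<open>s\<^sub>i \<in> S\<close> adjacent to \<open>d\<^sub>i\<close>.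
  Unless there is a path \<open>s\<^sub>1 u\<^sub>1 d\<^sub>2\<close> with \<open>u\<^sub>1 \<in> N\<^sub>2(x)\<close>, avoiding \<open>C\<^sub>6\<close> and \<open>C\<^sub>7\<close> makes \<open>d\<^sub>1\<close> the
  only \<open>X\<close>-neighbour of every vertex in the component of \<open>s\<^sub>1\<close> in \<open>G[N\<^sub>2(x)]\<close>, which would put
  that component into \<open>A\<^sup>*\<close>; symmetrically there is a path \<open>s\<^sub>2 u\<^sub>2 d\<^sub>1\<close>. Together with the
  edges \<open>s\<^sub>1 d\<^sub>1\<close>, \<open>s\<^sub>2 d\<^sub>2\<close> (and \<open>x\<close> if \<open>u\<^sub>1 = u\<^sub>2\<close>) these close a \<open>C\<^sub>6\<close>.
\<close>

lemma has_cycle_if_distinct_closed_walk: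
  assumes "distinct (v # vs)" "set (v # vs) \<subseteq> V" "list_all2 E (v # vs) (vs @ [v])"
  shows "has_cycle V E (length (v # vs))"
  unfolding has_cycle_def
proof (intro exI conjI allI impI)
  show "inj_on (nth (v # vs)) {0..<length (v # vs)}"
    using assms(1) by (auto intro: inj_on_nth)
  show "nth (v # vs) ` {0..<length (v # vs)} \<subseteq> V"
    by (auto intro!: subsetD[OF assms(2)] nth_mem)
  fix i assume "i < length (v # vs)"
  moreover have "(vs @ [v]) ! i = (v # vs) ! ((i + 1) mod length (v # vs))" if "i \<le> length vs"
    using that by (cases "i = length vs") (auto simp: nth_append)
  ultimately show "E ((v # vs) ! i) ((v # vs) ! ((i + 1) mod length (v # vs)))"
    using assms(3) by (auto simp: list_all2_conv_all_nth)
qed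

lemma components_reachable_subset:
  "(\<lambda>p q. E p q \<and> p \<in> W \<and> q \<in> W)\<^sup>*\<^sup>* v u \<Longrightarrow> v \<in> W \<Longrightarrow> u \<in> W"
  by (induction rule: rtranclp_induct) auto

lemma components_subset: "C \<in> components E W \<Longrightarrow> C \<subseteq> W"
  unfolding components_def by (auto intro: components_reachable_subset)

locale graph =
  fixes V :: "'a set" and E :: "'a \<Rightarrow> 'a \<Rightarrow> bool"
  assumes simple_graph: "simple_graph V E"
begin

lemma adj_sym: "E u v \<Longrightarrow> E v u"
  using simple_graph unfolding simple_graph_def by blast

lemma adj_irrefl [simp]: "\<not> E v v"
  using simple_graph unfolding simple_graph_def by blast

lemma adj_in_V: "E u v \<Longrightarrow> u \<in> V \<and> v \<in> V"
  using simple_graph unfolding simple_graph_def by blast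

lemma mem_nbhd_singleton: "u \<in> nbhd V E {v} \<longleftrightarrow> E v u"
  unfolding nbhd_def using adj_in_V by auto

lemma mem_nbhd2D: "u \<in> nbhd2 V E x \<Longrightarrow> \<not> E x u \<and> u \<noteq> x \<and> (\<exists>w. E x w \<and> E w u)"
  unfolding nbhd2_def by auto

lemma components_eq_reachable:
  assumes "C \<in> components E W" "c \<in> C"
  shows "C = {u. (\<lambda>p q. E p q \<and> p \<in> W \<and> q \<in> W)\<^sup>*\<^sup>* c u}"
proof -
  let ?R = "\<lambda>p q. E p q \<and> p \<in> W \<and> q \<in> W"
  obtain v where C: "C = {u. ?R\<^sup>*\<^sup>* v u}"
    using assms(1) unfolding components_def by auto
  have "symp ?R"
    unfolding symp_def using adj_sym by blast
  have "?R\<^sup>*\<^sup>* v c"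
    using C assms(2) by auto
  moreover from this have "?R\<^sup>*\<^sup>* c v"
    using symp_rtranclp[OF \<open>symp ?R\<close>] by (rule sympD[rotated])
  ultimately show ?thesis
    unfolding C by (auto intro: rtranclp_trans)
qed

lemma Astar_if_dominating_vertex:
  assumes "B \<in> components E (nbhd2 V E x)" "s \<in> B"
    and "\<And>v w. v \<in> B \<Longrightarrow> E x w \<Longrightarrow> E v w \<Longrightarrow> E s w"
  shows "B \<in> Astar V E x"
proof -
  have B_N2: "B \<subseteq> nbhd2 V E x"
    using assms(1) by (rule components_subset)
  have "nbhd V E {x} \<inter> nbhd V E {s} = nbhd V E {x} \<inter> nbhd V E B"
  proof (intro equalityI subsetI)
    fix u assume "u \<in> nbhd V E {x} \<inter> nbhd V E {s}"
    then have "E x u" "E s u" "u \<notin> B"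
      using B_N2 mem_nbhd2D by (auto simp: mem_nbhd_singleton)
    then show "u \<in> nbhd V E {x} \<inter> nbhd V E B"
      using assms(2) adj_in_V unfolding nbhd_def by auto
  next
    fix u assume "u \<in> nbhd V E {x} \<inter> nbhd V E B"
    then obtain v where "v \<in> B" "E v u" "E x u"
      unfolding nbhd_def using adj_sym by auto
    then show "u \<in> nbhd V E {x} \<inter> nbhd V E {s}"
      using assms(3) by (auto simp: mem_nbhd_singleton)
  qed
  then show ?thesis
    unfolding Astar_def using assms(1,2) by blast
qed

end

locale C67_free_graph = graph +
  assumes no_C6: "\<not> has_cycle V E 6" and no_C7: "\<not> has_cycle V E 7"
begin

text \<open>The edges may be given in either orientation, which keeps the many applications below short.\<close>

lemma no_6_cycle:
  assumes "E v0 v1 \<or> E v1 v0" "E v1 v2 \<or> E v2 v1" "E v2 v3 \<or> E v3 v2" "E v3 v4 \<or> E v4 v3"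
    "E v4 v5 \<or> E v5 v4" "E v5 v0 \<or> E v0 v5"
    and "distinct [v0, v1, v2, v3, v4, v5]"
  shows False
proof -
  have adj: "E v0 v1" "E v1 v2" "E v2 v3" "E v3 v4" "E v4 v5" "E v5 v0"
    using assms adj_sym by blast+
  have "has_cycle V E (length [v0, v1, v2, v3, v4, v5])"
    using assms adj adj_in_V by (intro has_cycle_if_distinct_closed_walk) auto
  then show False
    using no_C6 by (simp add: eval_nat_numeral)
qed

lemma no_7_cycle:
  assumes "E v0 v1 \<or> E v1 v0" "E v1 v2 \<or> E v2 v1" "E v2 v3 \<or> E v3 v2" "E v3 v4 \<or> E v4 v3"
    "E v4 v5 \<or> E v5 v4" "E v5 v6 \<or> E v6 v5" "E v6 v0 \<or> E v0 v6"
    and "distinct [v0, v1, v2, v3, v4, v5, v6]"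
  shows False
proof -
  have adj: "E v0 v1" "E v1 v2" "E v2 v3" "E v3 v4" "E v4 v5" "E v5 v6" "E v6 v0"
    using assms adj_sym by blast+
  have "has_cycle V E (length [v0, v1, v2, v3, v4, v5, v6])"
    using assms adj adj_in_V by (intro has_cycle_if_distinct_closed_walk) auto
  then show False
    using no_C7 by (simp add: eval_nat_numeral)
qed

end

locale rooted_C67_free_graph = C67_free_graph V E for V :: "'a set" and E +
  fixes x :: 'a
begin

abbreviation "X \<equiv> nbhd V E {x}"
abbreviation "N2 \<equiv> nbhd2 V E x"
abbreviation "N2_edge p q \<equiv> E p q \<and> p \<in> N2 \<and> q \<in> N2"

lemma N2_nbr_unique_if_edge_two_X_nbrs:
  assumes "a \<in> N2" "b \<in> N2" "E a b" "E a u" "u \<in> N2"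
    and "E x w1" "E b w1" "E x w2" "E b w2" "w1 \<noteq> w2"
  shows "u = b"
proof (rule ccontr)
  assume "u \<noteq> b"
  obtain z where z: "E x z" "E z u"
    using mem_nbhd2D[OF \<open>u \<in> N2\<close>] by blast
  obtain w where w: "E x w" "E b w" "w \<noteq> z"
    using assms(6-10) by blast
  show False
    by (rule no_6_cycle[of x z u a b w])
       (use assms z w \<open>u \<noteq> b\<close> mem_nbhd2D in fastforce)+
qed

lemma component_subset_edge_two_X_nbrs:
  assumes "A \<in> components E N2" "a \<in> A" "b \<in> A" "E a b"
    and "E x w1" "E a w1" "E x w2" "E a w2" "w1 \<noteq> w2"
    and "E x w3" "E b w3" "E x w4" "E b w4" "w3 \<noteq> w4"
  shows "A \<subseteq> {a, b}"
proof -
  have "a \<in> N2" "b \<in> N2"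
    using components_subset[OF assms(1)] assms(2,3) by auto
  have "u = a \<or> u = b" if "N2_edge\<^sup>*\<^sup>* a u" for u
    using that
  proof (induction rule: rtranclp_induct)
    case (step u u')
    then show ?case
      using N2_nbr_unique_if_edge_two_X_nbrs[of a b u' w3 w4]
        N2_nbr_unique_if_edge_two_X_nbrs[of b a u' w1 w2]
        \<open>a \<in> N2\<close> \<open>b \<in> N2\<close> assms(4-14) adj_sym by blast
  qed simp
  then show ?thesis
    using components_eq_reachable[OF assms(1,2)] by blast
qed

lemma no_common_X_nbr_if_edge_component_not_Astar:
  assumes "A \<in> components E N2" "A \<notin> Astar V E x" "A \<subseteq> {a, b}" "a \<in> A" "b \<in> A" "E a b"
  shows "\<not> (E x w \<and> E a w \<and> E b w)"
proof
  assume w: "E x w \<and> E a w \<and> E b w"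
  have "A \<subseteq> N2"
    using assms(1) by (rule components_subset)
  then have XA: "u \<in> X \<inter> nbhd V E A \<longleftrightarrow> E x u \<and> (E a u \<or> E b u)" for u
    using assms(3-5) mem_nbhd2D adj_in_V unfolding nbhd_def by (auto simp: mem_nbhd_singleton)
  have "X \<inter> nbhd V E {a} \<noteq> X \<inter> nbhd V E A"
    using assms(1,2,4) unfolding Astar_def by blast
  then obtain y where y: "E x y" "E b y" "\<not> E a y"
    using XA unfolding set_eq_iff Int_iff mem_nbhd_singleton by blast
  have "X \<inter> nbhd V E {b} \<noteq> X \<inter> nbhd V E A"
    using assms(1,2,5) unfolding Astar_def by blast
  then obtain z where z: "E x z" "E a z" "\<not> E b z"
    using XA unfolding set_eq_iff Int_iff mem_nbhd_singleton by blast
  have "a \<in> N2" "b \<in> N2"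
    using \<open>A \<subseteq> N2\<close> assms(4,5) by auto
  then show False
    using w y z assms(6) mem_nbhd2D by (intro no_6_cycle[of x z a w b y]) fastforce+
qed

text \<open>
  Along a path in \<open>G[N\<^sub>2(x)]\<close>, a vertex \<open>v'\<close> with an \<open>X\<close>-neighbour \<open>w \<noteq> d\<close>, its predecessor \<open>v\<close>
  and the predecessor \<open>p\<close> of \<open>v\<close> would close the \<open>C\<^sub>6\<close> \<open>x w v' v p d\<close>; only the first step, where
  \<open>p\<close> does not exist yet, has to be assumed.
\<close>

lemma unique_X_nbr_spreads_over_component:
  assumes "s \<in> N2"
    and s_nbr: "\<And>w. E x w \<Longrightarrow> E w s \<Longrightarrow> w = d"
    and first_layer: "\<And>v w. v \<in> N2 \<Longrightarrow> E s v \<Longrightarrow> E x w \<Longrightarrow> E w v \<Longrightarrow> w = d"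
    and "N2_edge\<^sup>*\<^sup>* s v" "E x w" "E w v"
  shows "w = d"
proof -
  define only_d where "only_d v \<longleftrightarrow> (\<forall>w. E x w \<and> E w v \<longrightarrow> w = d)" for v
  have "v \<in> N2 \<and> only_d v \<and> (v = s \<or> (\<exists>p\<in>N2. E p v \<and> only_d p))"
    using \<open>N2_edge\<^sup>*\<^sup>* s v\<close>
  proof (induction rule: rtranclp_induct)
    case base
    then show ?case
      using \<open>s \<in> N2\<close> s_nbr unfolding only_d_def by blast
  next
    case (step v v')
    have "only_d v'"
      unfolding only_d_def
    proof (intro allI impI)
      fix w assume w: "E x w \<and> E w v'"
      show "w = d"
      proof (cases "v = s")
        case True
        then show ?thesis
          using first_layer step.hyps(2) w by blast
      next
        case False
        then obtain p where p: "p \<in> N2" "E p v" "only_d p"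
          using step.IH by blast
        obtain w' where w': "E x w'" "E w' p"
          using mem_nbhd2D[OF p(1)] by blast
        then have "w' = d"
          using p(3) unfolding only_d_def by blast
        show "w = d"
        proof (rule ccontr)
          assume "w \<noteq> d"
          moreover have "v' \<noteq> p"
            using p(3) w \<open>w \<noteq> d\<close> unfolding only_d_def by blast
          ultimately show False
            using w w' \<open>w' = d\<close> p step.hyps(2) mem_nbhd2D
            by (intro no_6_cycle[of x w v' v p d]) fastforce+
        qed
      qed
    qed
    then show ?case
      using step.hyps(2) step.IH unfolding only_d_def by blast
  qed
  then show ?thesis
    using assms(5,6) unfolding only_d_def by blast
qed

lemma N2_path_to_second_nbr_if_not_in_Astar:
  assumes "a \<in> N2" "b \<in> N2" "E a b"
    and "E a d1" "E a d2" "E b d3" "E b d4" "E x d1" "E x d2" "E x d3" "E x d4"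
    and "distinct [d1, d2, d3, d4]"
    and "s \<in> N2" "s \<notin> VAstar V E x" "E s d1" "s \<noteq> a" "s \<noteq> b"
  shows "\<exists>u\<in>N2. E s u \<and> E u d2"
proof (rule ccontr)
  assume no_path: "\<not> ?thesis"
  note N2_vertices = mem_nbhd2D[OF \<open>a \<in> N2\<close>] mem_nbhd2D[OF \<open>b \<in> N2\<close>] mem_nbhd2D[OF \<open>s \<in> N2\<close>]
  have "\<not> E s a"
  proof
    assume "E s a"
    then show False
      using assms N2_vertices by (intro no_6_cycle[of s d1 x d3 b a]) auto
  qed
  have s_nbr: "w = d1" if "E x w" "E w s" for w
  proof (rule ccontr)
    assume "w \<noteq> d1"
    show False
    proof (cases "w = d3")
      case True
      then show False
        using that assms N2_vertices by (intro no_7_cycle[of x d4 b a d1 s d3]) auto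
    next
      case False
      then show False
        using that \<open>w \<noteq> d1\<close> assms N2_vertices by (intro no_7_cycle[of x w s d1 a b d3]) auto
    qed
  qed
  have first_layer: "w = d1" if "v \<in> N2" "E s v" "E x w" "E w v" for v w
  proof (rule ccontr)
    assume "w \<noteq> d1"
    moreover have "w \<noteq> d2"
      using no_path that adj_sym by blast
    moreover have "v \<noteq> a"
      using \<open>\<not> E s a\<close> that(2) by blast
    ultimately show False
      using that assms N2_vertices mem_nbhd2D[OF \<open>v \<in> N2\<close>]
      by (intro no_7_cycle[of x w v s d1 a d2]) auto
  qed
  define B where "B = {u. N2_edge\<^sup>*\<^sup>* s u}"
  have "B \<in> components E N2"
    unfolding B_def components_def using \<open>s \<in> N2\<close> by blast
  moreover have "E s w" if "v \<in> B" "E x w" "E v w" for v w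
  proof -
    have "N2_edge\<^sup>*\<^sup>* s v"
      using \<open>v \<in> B\<close> unfolding B_def by simp
    have "w = d1"
      using \<open>s \<in> N2\<close> s_nbr first_layer \<open>N2_edge\<^sup>*\<^sup>* s v\<close> \<open>E x w\<close> adj_sym[OF \<open>E v w\<close>]
      by (rule unique_X_nbr_spreads_over_component)
    then show ?thesis
      using \<open>E s d1\<close> by simp
  qed
  ultimately have "B \<in> Astar V E x"
    by (intro Astar_if_dominating_vertex[of B x s]) (auto simp: B_def)
  then show False
    using \<open>s \<notin> VAstar V E x\<close> unfolding VAstar_def B_def by blast
qed

lemma D_nbrs_of_edge:
  assumes "A \<in> components E N2" "A \<notin> Astar V E x" "a \<in> A" "b \<in> A" "E a b"
    and "card (nbhd V E {a} \<inter> Dset V E x) = 2" "card (nbhd V E {b} \<inter> Dset V E x) = 2"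
  obtains d1 d2 d3 d4 where "d1 \<in> Dset V E x" "d2 \<in> Dset V E x"
    "E a d1" "E a d2" "E b d3" "E b d4" "\<not> E b d1" "\<not> E b d2"
    "E x d1" "E x d2" "E x d3" "E x d4" "distinct [d1, d2, d3, d4]"
proof -
  obtain d1 d2 where d12: "nbhd V E {a} \<inter> Dset V E x = {d1, d2}" "d1 \<noteq> d2"
    using assms(6) card_2_iff by metis
  obtain d3 d4 where d34: "nbhd V E {b} \<inter> Dset V E x = {d3, d4}" "d3 \<noteq> d4"
    using assms(7) card_2_iff by metis
  have D: "d1 \<in> Dset V E x" "d2 \<in> Dset V E x" "d3 \<in> Dset V E x" "d4 \<in> Dset V E x"
    using d12 d34 by auto
  have ad: "E a d1" "E a d2" and bd: "E b d3" "E b d4"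
    using d12 d34 mem_nbhd_singleton by blast+
  have xd: "E x d1" "E x d2" "E x d3" "E x d4"
    using D mem_nbhd_singleton unfolding Dset_def by blast+
  have "A \<subseteq> {a, b}"
    using assms(1,3-5) xd(1) ad(1) xd(2) ad(2) d12(2) xd(3) bd(1) xd(4) bd(2) d34(2)
    by (rule component_subset_edge_two_X_nbrs)
  then have "\<not> E b d1" "\<not> E b d2"
    using no_common_X_nbr_if_edge_component_not_Astar assms(1-5) xd ad by blast+
  moreover from this have "distinct [d1, d2, d3, d4]"
    using d12(2) d34(2) bd by auto
  ultimately show thesis
    using that D(1,2) ad bd xd by blast
qed

lemma no_crossing_N2_paths:
  assumes "E x d1" "E x d2" "d1 \<noteq> d2"
    and "s1 \<in> N2" "s2 \<in> N2" "s1 \<noteq> s2" "\<not> E s1 s2" "E s1 d1" "E s2 d2"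
    and "u1 \<in> N2" "u2 \<in> N2" "E s1 u1" "E u1 d2" "E s2 u2" "E u2 d1"
  shows False
proof -
  note N2_vertices = mem_nbhd2D[OF assms(4)] mem_nbhd2D[OF assms(5)]
    mem_nbhd2D[OF assms(10)] mem_nbhd2D[OF assms(11)]
  show False
  proof (cases "u1 = u2")
    case True
    then show False
      using assms N2_vertices by (intro no_6_cycle[of s1 u1 s2 d2 x d1]) auto
  next
    case False
    then show False
      using assms N2_vertices adj_sym by (intro no_6_cycle[of s1 u1 d2 s2 u2 d1]) auto
  qed
qed

lemma no_independent_D_cover_avoiding_endpoint:
  assumes "A \<in> components E N2" "A \<notin> Astar V E x"
    and "a \<in> A" "b \<in> A" "E a b" "a \<notin> S"
    and "card (nbhd V E {a} \<inter> Dset V E x) = 2" "card (nbhd V E {b} \<inter> Dset V E x) = 2"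
    and "S \<subseteq> N2 - VAstar V E x" "independent E S" "Dset V E x \<subseteq> nbhd V E S"
  shows False
proof -
  obtain d1 d2 d3 d4 where D: "d1 \<in> Dset V E x" "d2 \<in> Dset V E x"
    and ad: "E a d1" "E a d2" and bd: "E b d3" "E b d4" "\<not> E b d1" "\<not> E b d2"
    and xd: "E x d1" "E x d2" "E x d3" "E x d4" and d_distinct: "distinct [d1, d2, d3, d4]"
    using D_nbrs_of_edge[OF assms(1-5,7,8)] by blast
  have "a \<in> N2" "b \<in> N2"
    using components_subset[OF assms(1)] assms(3,4) by auto
  obtain s1 s2 where s: "s1 \<in> S" "E s1 d1" "s2 \<in> S" "E s2 d2"
    using assms(11) D unfolding nbhd_def by blast
  have s_N2: "s1 \<in> N2" "s1 \<notin> VAstar V E x" "s2 \<in> N2" "s2 \<notin> VAstar V E x"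
    using assms(9) s by auto
  have s_ab: "s1 \<noteq> a" "s1 \<noteq> b" "s2 \<noteq> a" "s2 \<noteq> b"
    using s assms(6) bd by auto
  have "distinct [d2, d1, d3, d4]"
    using d_distinct by auto
  obtain u1 where u1: "u1 \<in> N2" "E s1 u1" "E u1 d2"
    using N2_path_to_second_nbr_if_not_in_Astar[of a b d1 d2 d3 d4 s1]
      \<open>a \<in> N2\<close> \<open>b \<in> N2\<close> assms(5) ad bd xd d_distinct s s_N2 s_ab by blast
  obtain u2 where u2: "u2 \<in> N2" "E s2 u2" "E u2 d1"
    using N2_path_to_second_nbr_if_not_in_Astar[of a b d2 d1 d3 d4 s2] \<open>distinct [d2, d1, d3, d4]\<close>
      \<open>a \<in> N2\<close> \<open>b \<in> N2\<close> assms(5) ad bd xd s s_N2 s_ab by blast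
  have "s1 \<noteq> s2"
  proof
    assume "s1 = s2"
    then show False
      using s ad bd xd assms(5) d_distinct s_ab mem_nbhd2D[OF \<open>a \<in> N2\<close>]
        mem_nbhd2D[OF \<open>b \<in> N2\<close>] mem_nbhd2D[OF s_N2(1)]
      by (intro no_7_cycle[of s1 d1 a b d3 x d2]) auto
  qed
  moreover have "\<not> E s1 s2"
    using assms(10) s unfolding independent_def by blast
  ultimately show False
    using xd(1,2) d_distinct s_N2(1,3) s u1 u2
    by (intro no_crossing_N2_paths[of d1 d2 s1 s2 u1 u2]) auto
qed

end

theorem corollary2p13:
  fixes V :: "'a set" and E :: "'a \<Rightarrow> 'a \<Rightarrow> bool" and x a b :: 'a and A :: "'a set"
  assumes "simple_graph V E"
    and "\<not> has_cycle V E 6" and "\<not> has_cycle V E 7"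
    and "x \<in> V"
    and "A \<in> components E (nbhd2 V E x)" and "A \<notin> Astar V E x"
    and "a \<in> A" and "b \<in> A" and "E a b"
    and "card (nbhd V E {a} \<inter> Dset V E x) = 2"
    and "card (nbhd V E {b} \<inter> Dset V E x) = 2"
  shows "\<not> (\<exists>S. S \<subseteq> nbhd2 V E x - VAstar V E x \<and> independent E S
              \<and> Dset V E x \<subseteq> nbhd V E S)"
proof
  assume "\<exists>S. S \<subseteq> nbhd2 V E x - VAstar V E x \<and> independent E S \<and> Dset V E x \<subseteq> nbhd V E S"
  then obtain S where S: "S \<subseteq> nbhd2 V E x - VAstar V E x" "independent E S" "Dset V E x \<subseteq> nbhd V E S"
    by blast
  interpret rooted_C67_free_graph V E x
    using assms(1-3) by unfold_locales
  have "a \<notin> S \<or> b \<notin> S"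
    using S(2) assms(9) unfolding independent_def by blast
  then show False
  proof
    assume "a \<notin> S"
    then show False
      using no_independent_D_cover_avoiding_endpoint assms(5-11) S by blast
  next
    assume "b \<notin> S"
    then show False
      using no_independent_D_cover_avoiding_endpoint[of A b a S] assms(5-11) adj_sym S by blast
  qed
qed

end
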